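(* Let $\vec p,\vec s$ be $n$-tuples with entries in $[1,\infty]$, $1\le\alpha\le\infty$, with $\frac1n\sum_{i=1}^n\frac1{s_i}\le\frac1\alpha\le\frac1n\sum_{i=1}^n\frac1{p_i}$. For every constant $\rho\in(0,\infty)$ there exist constants $0<c\le C$ (independent of $f$ and $r$) such that for all $f\in L^1_{loc}(\mathbb R^n)$ and all $r>0$, $$c\,\big\|\,\|f\chi_{B(\cdot,\rho r)}\|_{L^{\vec p}}\big\|_{L^{\vec s}}\le\big\|\,\|f\chi_{B(\cdot,r)}\|_{L^{\vec p}}\big\|_{L^{\vec s}}\le C\,\big\|\,\|f\chi_{B(\cdot,\rho r)}\|_{L^{\vec p}}\big\|_{L^{\vec s}}.$$
   Context: For $\vec p=(p_1,\dots,p_n)$ with $1\le p_i\le\infty$, $\|f\|_{L^{\vec p}}=\Big(\int_{\mathbb R}\cdots\Big(\int_{\mathbb R}|f(x)|^{p_1}\,dx_1\Big)^{p_2/p_1}\cdots dx_n\Big)^{1/p_n}$ (usual modification when some $p_i=\infty$). $B(y,r)$ is the open ball of center $y$ and radius $r$, $\chi_E$ the characteristic function of $E$; $\big\|\,\|f\chi_{B(\cdot,r)}\|_{L^{\vec p}}\big\|_{L^{\vec s}}$ denotes the $L^{\vec s}$-norm of the function $y\mapsto\|f\chi_{B(y,r)}\|_{L^{\vec p}}$. *)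

theory Defs
  imports "HOL-Analysis.Analysis"
begin

(* Points of R^n are represented as functions x :: nat => real; only the
   coordinates x 0, ..., x (n-1) matter.  Following HOL-Analysis's PiM
   convention, the canonical representatives have value "undefined" outside
   {..<n} (the base point below). *)

definition epow :: "ennreal \<Rightarrow> real \<Rightarrow> ennreal" where
  "epow v e = (if v = \<infinity> then \<infinity> else ennreal (enn2real v powr e))"

definition ess_sup_real :: "(real \<Rightarrow> ennreal) \<Rightarrow> ennreal" where
  "ess_sup_real g = Inf {z. AE t in lborel. g t \<le> z}"

definition Lp1 :: "ennreal \<Rightarrow> (real \<Rightarrow> ennreal) \<Rightarrow> ennreal" where
  "Lp1 p g = (if p = \<infinity> then ess_sup_real g
              else epow (\<integral>\<^sup>+ t. epow (g t) (enn2real p) \<partial>lborel) (1 / enn2real p))"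

(* mixed_partial p k f x (f nonnegative, possibly \<infinity>-valued): the mixed norm in the first k coordinates
   x_1,...,x_k (indices 0..k-1), innermost x_1 with exponent p 0,
   the remaining coordinates of x being kept fixed *)
primrec mixed_partial ::
  "(nat \<Rightarrow> ennreal) \<Rightarrow> nat \<Rightarrow> ((nat \<Rightarrow> real) \<Rightarrow> ennreal) \<Rightarrow> (nat \<Rightarrow> real) \<Rightarrow> ennreal" where
  "mixed_partial p 0 f x = f x"
| "mixed_partial p (Suc k) f x = Lp1 (p k) (\<lambda>t. mixed_partial p k f (x(k := t)))"

definition mixed_norm :: "nat \<Rightarrow> (nat \<Rightarrow> ennreal) \<Rightarrow> ((nat \<Rightarrow> real) \<Rightarrow> real) \<Rightarrow> ennreal" where
  "mixed_norm n p f = mixed_partial p n (\<lambda>x. ennreal \<bar>f x\<bar>) (\<lambda>_. undefined)"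

definition dist_n :: "nat \<Rightarrow> (nat \<Rightarrow> real) \<Rightarrow> (nat \<Rightarrow> real) \<Rightarrow> real" where
  "dist_n n x y = sqrt (\<Sum>i<n. (x i - y i)\<^sup>2)"

definition ball_n :: "nat \<Rightarrow> (nat \<Rightarrow> real) \<Rightarrow> real \<Rightarrow> (nat \<Rightarrow> real) set" where
  "ball_n n y r = {x. dist_n n x y < r}"

abbreviation lebesgue_n :: "nat \<Rightarrow> (nat \<Rightarrow> real) measure" where
  "lebesgue_n n \<equiv> PiM {..<n} (\<lambda>_. lborel)"

definition locally_integrable_n :: "nat \<Rightarrow> ((nat \<Rightarrow> real) \<Rightarrow> real) \<Rightarrow> bool" where
  "locally_integrable_n n f \<longleftrightarrow> f \<in> borel_measurable (lebesgue_n n) \<and>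
     (\<forall>y R. set_integrable (lebesgue_n n) (space (lebesgue_n n) \<inter> ball_n n y R) f)"

definition amalgam_norm ::
  "nat \<Rightarrow> (nat \<Rightarrow> ennreal) \<Rightarrow> (nat \<Rightarrow> ennreal) \<Rightarrow> real \<Rightarrow> ((nat \<Rightarrow> real) \<Rightarrow> real) \<Rightarrow> ennreal" where
  "amalgam_norm n p s r f =
     mixed_partial s n
       (\<lambda>y. (mixed_norm n p (\<lambda>x. f x * indicator (ball_n n y r) x))) (\<lambda>_. undefined)"

end

theory Submission
  imports Defs "HOL-Probability.Essential_Supremum"
begin

(* For \<lambda> > 0 the ball B(y, \<lambda>r) is covered by the balls B(y + (r/n) m, r), m ranging over the
   integer points of a cube whose size depends only on n and \<lambda>, since rounding x - y to the
   grid of mesh r/n moves it by at most r/(2 sqrt n).  Hence f \<chi>_B(y,\<lambda>r) is bounded pointwise by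
   the sum of the f \<chi>_B(y + (r/n) m, r).  The one-variable L^q norms are monotone, homogeneous,
   translation invariant and satisfy a triangle inequality up to the factor 4, so iterating
   them bounds the amalgam norm of radius \<lambda>r by a constant times the sum of the amalgam norms
   of radius r of the translates, all of which equal that of f.  Applying this with
   \<lambda> = \<rho> and \<lambda> = 1/\<rho> gives both inequalities. *)

lemma powr_add_le_two_powr:
  fixes x y e :: real
  assumes "0 \<le> x" "0 \<le> y" "0 \<le> e"
  shows "(x + y) powr e \<le> 2 powr e * (x powr e + y powr e)"
proof -
  have "(x + y) powr e \<le> (2 * max x y) powr e"
    using assms by (intro powr_mono2) auto
  also have "\<dots> = 2 powr e * max x y powr e"
    using assms by (simp add: powr_mult)
  also have "max x y powr e \<le> x powr e + y powr e"
    by (cases "x \<le> y") (auto simp: max_def)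
  finally show ?thesis
    by (simp add: mult_left_mono)
qed

lemma epow_mono:
  assumes "a \<le> b" "0 \<le> e"
  shows "epow a e \<le> epow b e"
proof (cases "b = \<infinity>")
  case False
  then have "a \<noteq> \<infinity>"
    using assms top.extremum_unique by fastforce
  with False assms show ?thesis
    by (auto simp: epow_def less_top intro!: ennreal_leI powr_mono2 enn2real_mono)
qed (simp add: epow_def)

lemma epow_add_le:
  assumes "0 \<le> e"
  shows "epow (a + b) e \<le> ennreal (2 powr e) * (epow a e + epow b e)"
proof (cases "a = \<infinity> \<or> b = \<infinity>")
  case True
  then show ?thesis
    by (auto simp: epow_def ennreal_mult_top)
next
  case False
  then obtain x y where "a = ennreal x" "b = ennreal y" "0 \<le> x" "0 \<le> y"
    by (cases a; cases b) auto
  with assms powr_add_le_two_powr[of x y e] show ?thesis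
    by (simp add: epow_def ennreal_plus[symmetric] ennreal_mult[symmetric] del: ennreal_plus)
qed

lemma epow_cmult:
  assumes "0 < c" "0 \<le> e"
  shows "epow (ennreal c * a) e = ennreal (c powr e) * epow a e"
proof (cases "a = \<infinity>")
  case False
  then obtain x where "a = ennreal x" "0 \<le> x"
    by (cases a) auto
  with assms show ?thesis
    by (simp add: epow_def ennreal_mult[symmetric] powr_mult enn2real_mult)
qed (use assms in \<open>simp add: epow_def ennreal_mult_top\<close>)

lemma epow_powr_inverse_cmult:
  assumes "0 < c" "1 \<le> Q"
  shows "epow (ennreal (c powr Q) * a) (1 / Q) = ennreal c * epow a (1 / Q)"
  using assms by (simp add: epow_cmult powr_powr)

lemma measurable_epow [measurable]:
  assumes [measurable]: "f \<in> borel_measurable M"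
  shows "(\<lambda>x. epow (f x) e) \<in> borel_measurable M"
  unfolding epow_def by measurable

lemma AE_le_ess_sup_real:
  assumes "g \<in> borel_measurable lborel"
  shows "AE t in lborel. g t \<le> ess_sup_real g"
  using esssup_AE[of g lborel] esssup_eq_AE[OF assms] by (simp add: ess_sup_real_def)

lemma ess_sup_real_le: "AE t in lborel. g t \<le> z \<Longrightarrow> ess_sup_real g \<le> z"
  unfolding ess_sup_real_def by (rule Inf_lower) simp

lemma ess_sup_real_mono: "(\<And>t. g t \<le> h t) \<Longrightarrow> ess_sup_real g \<le> ess_sup_real h"
  unfolding ess_sup_real_def
  by (rule Inf_superset_mono) (auto elim: eventually_mono intro: order_trans)

lemma one_le_enn2real: "1 \<le> q \<Longrightarrow> q \<noteq> \<infinity> \<Longrightarrow> 1 \<le> enn2real q"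
  using enn2real_mono[of 1 q] by (simp add: less_top)

lemma Lp1_finite:
  assumes "1 \<le> q" "q \<noteq> \<infinity>"
  obtains Q where "1 \<le> Q" "\<And>g. Lp1 q g = epow (\<integral>\<^sup>+ t. epow (g t) Q \<partial>lborel) (1 / Q)"
  using assms one_le_enn2real[OF assms] by (simp add: Lp1_def)

lemma Lp1_mono:
  assumes "\<And>t. g t \<le> h t"
  shows "Lp1 q g \<le> Lp1 q h"
  using assms by (auto simp: Lp1_def ess_sup_real_mono intro!: epow_mono nn_integral_mono)

lemma Lp1_zero: "Lp1 q (\<lambda>t. 0) = 0"
  using ess_sup_real_le[of "\<lambda>t. 0" 0] by (simp add: Lp1_def epow_def)

lemma Lp1_cmult_le:
  assumes [measurable]: "g \<in> borel_measurable lborel" and "1 \<le> q" "0 < c"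
  shows "Lp1 q (\<lambda>t. ennreal c * g t) \<le> ennreal c * Lp1 q g"
proof (cases "q = \<infinity>")
  case True
  have "AE t in lborel. ennreal c * g t \<le> ennreal c * ess_sup_real g"
    using AE_le_ess_sup_real[OF assms(1)] by (auto elim!: eventually_mono intro: mult_left_mono)
  with True show ?thesis
    by (simp add: Lp1_def ess_sup_real_le)
next
  case False
  then obtain Q where Q: "1 \<le> Q" and Lp1: "\<And>g. Lp1 q g = epow (\<integral>\<^sup>+ t. epow (g t) Q \<partial>lborel) (1 / Q)"
    using Lp1_finite assms(2) by blast
  have "(\<integral>\<^sup>+ t. epow (ennreal c * g t) Q \<partial>lborel) = ennreal (c powr Q) * (\<integral>\<^sup>+ t. epow (g t) Q \<partial>lborel)"
    using Q assms by (simp add: epow_cmult nn_integral_cmult)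
  with Q assms show ?thesis
    by (simp add: Lp1 epow_powr_inverse_cmult)
qed

lemma Lp1_add_le:
  assumes [measurable]: "g \<in> borel_measurable lborel" "h \<in> borel_measurable lborel"
    and "1 \<le> q"
  shows "Lp1 q (\<lambda>t. g t + h t) \<le> 4 * (Lp1 q g + Lp1 q h)"
proof (cases "q = \<infinity>")
  case True
  have "AE t in lborel. g t + h t \<le> ess_sup_real g + ess_sup_real h"
    using AE_le_ess_sup_real[OF assms(1)] AE_le_ess_sup_real[OF assms(2)] by eventually_elim (rule add_mono)
  then have "ess_sup_real (\<lambda>t. g t + h t) \<le> 1 * (ess_sup_real g + ess_sup_real h)"
    by (simp add: ess_sup_real_le)
  also have "\<dots> \<le> 4 * (ess_sup_real g + ess_sup_real h)"
    by (rule mult_right_mono) auto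
  finally show ?thesis
    using True by (simp add: Lp1_def)
next
  case False
  then obtain Q where Q: "1 \<le> Q" and Lp1: "\<And>g. Lp1 q g = epow (\<integral>\<^sup>+ t. epow (g t) Q \<partial>lborel) (1 / Q)"
    using Lp1_finite assms(3) by blast
  define A where "A = (\<integral>\<^sup>+ t. epow (g t) Q \<partial>lborel)"
  define B where "B = (\<integral>\<^sup>+ t. epow (h t) Q \<partial>lborel)"
  have "(\<integral>\<^sup>+ t. epow (g t + h t) Q \<partial>lborel)
      \<le> (\<integral>\<^sup>+ t. ennreal (2 powr Q) * (epow (g t) Q + epow (h t) Q) \<partial>lborel)"
    using Q by (intro nn_integral_mono epow_add_le) auto
  also have "\<dots> = ennreal (2 powr Q) * (A + B)"
    by (simp add: A_def B_def nn_integral_cmult nn_integral_add)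
  finally have "Lp1 q (\<lambda>t. g t + h t) \<le> epow (ennreal (2 powr Q) * (A + B)) (1 / Q)"
    using Q by (simp add: Lp1 epow_mono)
  also have "\<dots> = 2 * epow (A + B) (1 / Q)"
    using Q by (simp add: epow_powr_inverse_cmult)
  also have "\<dots> \<le> 2 * (ennreal (2 powr (1 / Q)) * (epow A (1 / Q) + epow B (1 / Q)))"
    using Q by (intro mult_left_mono epow_add_le) auto
  also have "\<dots> \<le> 2 * (2 * (epow A (1 / Q) + epow B (1 / Q)))"
    using Q powr_mono[of "1 / Q" 1 2]
    by (intro mult_left_mono mult_right_mono) (auto simp: ennreal_leI[of _ 2, simplified])
  also have "\<dots> = 4 * (Lp1 q g + Lp1 q h)"
    by (simp add: Lp1 A_def B_def mult.assoc[symmetric])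
  finally show ?thesis .
qed

lemma Lp1_translate:
  assumes [measurable]: "g \<in> borel_measurable lborel"
  shows "Lp1 q (\<lambda>t. g (t + a)) = Lp1 q g"
proof (cases "q = \<infinity>")
  case True
  have "(AE t in lborel. g t \<le> z) \<longleftrightarrow> (AE t in lborel. g (t + a) \<le> z)" for z
  proof -
    have "(AE t in lborel. g t \<le> z) \<longleftrightarrow> (AE t in distr lborel borel ((+) a). g t \<le> z)"
      by (subst lborel_distr_plus) (rule refl)
    also have "\<dots> \<longleftrightarrow> (AE t in lborel. g (a + t) \<le> z)"
      by (rule AE_distr_iff) measurable
    finally show ?thesis
      by (simp add: add.commute)
  qed
  with True show ?thesis
    by (simp add: Lp1_def ess_sup_real_def)
next
  case False
  have "(\<integral>\<^sup>+ t. epow (g t) Q \<partial>lborel) = (\<integral>\<^sup>+ t. epow (g (t + a)) Q \<partial>lborel)" for Q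
    using nn_integral_real_affine[of "\<lambda>t. epow (g t) Q" 1 a] by (simp add: add.commute)
  with False show ?thesis
    by (simp add: Lp1_def)
qed

lemma sets_Collect_AE_le:
  fixes g :: "'a \<Rightarrow> real \<Rightarrow> ennreal"
  assumes [measurable]: "case_prod g \<in> borel_measurable (N \<Otimes>\<^sub>M lborel)"
  shows "{x \<in> space N. AE t in lborel. g x t \<le> c} \<in> sets N"
proof -
  let ?E = "{z \<in> space (N \<Otimes>\<^sub>M lborel). c < case_prod g z}"
  have E: "?E \<in> sets (N \<Otimes>\<^sub>M lborel)"
    by measurable
  have [measurable]: "(\<lambda>x. emeasure lborel (Pair x -` ?E)) \<in> borel_measurable N"
    using lborel.measurable_emeasure_Pair[OF E] .
  have "(AE t in lborel. g x t \<le> c) \<longleftrightarrow> emeasure lborel (Pair x -` ?E) = 0" if "x \<in> space N" for x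
  proof (rule AE_iff_measurable)
    show "Pair x -` ?E \<in> sets lborel"
      using measurable_Pair2[OF assms that] by (simp add: space_pair_measure that)
  qed (auto simp: space_pair_measure that not_le)
  then have "{x \<in> space N. AE t in lborel. g x t \<le> c} = {x \<in> space N. emeasure lborel (Pair x -` ?E) = 0}"
    by auto
  also have "\<dots> \<in> sets N"
    by measurable
  finally show ?thesis .
qed

lemma borel_measurable_Lp1:
  assumes [measurable]: "case_prod g \<in> borel_measurable (N \<Otimes>\<^sub>M lborel)"
  shows "(\<lambda>x. Lp1 q (g x)) \<in> borel_measurable N"
proof (cases "q = \<infinity>")
  case False
  have [measurable]: "(\<lambda>x. \<integral>\<^sup>+ t. epow (g x t) Q \<partial>lborel) \<in> borel_measurable N" for Q
    by (rule lborel.borel_measurable_nn_integral) (simp add: case_prod_beta')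
  from False show ?thesis
    by (simp add: Lp1_def)
next
  case True
  let ?S = "\<lambda>y. \<Union>r \<in> {r. ennreal (real_of_rat r) < y}. {x \<in> space N. AE t in lborel. g x t \<le> ennreal (real_of_rat r)}"
  have eq: "{x \<in> space N. Lp1 q (g x) < y} = ?S y" for y
  proof (intro set_eqI iffI)
    fix x assume x: "x \<in> {x \<in> space N. Lp1 q (g x) < y}"
    then obtain r where r: "ess_sup_real (g x) < ennreal (real_of_rat r)" "ennreal (real_of_rat r) < y"
      using True ennreal_rat_dense[of "ess_sup_real (g x)" y] by (auto simp: Lp1_def)
    have "g x \<in> borel_measurable lborel"
      using measurable_Pair2[OF assms, of x] x by simp
    from AE_le_ess_sup_real[OF this] have "AE t in lborel. g x t \<le> ennreal (real_of_rat r)"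
      by eventually_elim (use r(1) in auto)
    with r x show "x \<in> ?S y"
      by auto
  next
    fix x assume "x \<in> ?S y"
    then obtain r where "x \<in> space N" "ennreal (real_of_rat r) < y"
      "AE t in lborel. g x t \<le> ennreal (real_of_rat r)"
      by auto
    with True ess_sup_real_le[of "g x"] show "x \<in> {x \<in> space N. Lp1 q (g x) < y}"
      by (force simp: Lp1_def)
  qed
  show ?thesis
  proof (rule borel_measurableI_less)
    show "{x \<in> space N. Lp1 q (g x) < y} \<in> sets N" for y
      unfolding eq using sets_Collect_AE_le[OF assms] by (intro sets.countable_UN'') auto
  qed
qed

(* Measurability is tracked on the product over all coordinates, so that the slices x(k := t)
   taken by mixed_partial need no extensionality bookkeeping; only the \<sigma>-algebra is used. *)
abbreviation lborel_coords :: "(nat \<Rightarrow> real) measure" where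
  "lborel_coords \<equiv> PiM UNIV (\<lambda>_. lborel)"

lemma measurable_fun_upd_coord:
  "(\<lambda>(x, t). x(k := t)) \<in> measurable (lborel_coords \<Otimes>\<^sub>M lborel) lborel_coords"
proof -
  have "(\<lambda>(x, t). x(k := t)) = (\<lambda>z i. if i = k then snd z else fst z i)"
    by (auto simp: fun_eq_iff)
  also have "\<dots> \<in> measurable (lborel_coords \<Otimes>\<^sub>M lborel) lborel_coords"
  proof (rule measurable_PiM_single')
    show "(\<lambda>z. if i = k then snd z else fst z i) \<in> measurable (lborel_coords \<Otimes>\<^sub>M lborel) lborel" for i
      by (cases "i = k") simp_all
  qed (simp add: space_PiM)
  finally show ?thesis .
qed

lemma measurable_fun_upd_slice: "(\<lambda>t. x(k := t)) \<in> measurable lborel lborel_coords"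
  using measurable_Pair2[OF measurable_fun_upd_coord, of x k] by (simp add: space_PiM)

lemma borel_measurable_mixed_partial_param:
  assumes "case_prod F \<in> borel_measurable (N \<Otimes>\<^sub>M lborel_coords)"
  shows "case_prod (\<lambda>w. mixed_partial q k (F w)) \<in> borel_measurable (N \<Otimes>\<^sub>M lborel_coords)"
proof (induction k)
  case 0
  then show ?case
    using assms by simp
next
  case (Suc k)
  have "(\<lambda>((w, x), t). (w, x(k := t)))
      \<in> measurable ((N \<Otimes>\<^sub>M lborel_coords) \<Otimes>\<^sub>M lborel) (N \<Otimes>\<^sub>M lborel_coords)"
  proof -
    have "(\<lambda>((w, x), t). (x, t)) \<in> measurable ((N \<Otimes>\<^sub>M lborel_coords) \<Otimes>\<^sub>M lborel) (lborel_coords \<Otimes>\<^sub>M lborel)"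
      by (simp add: case_prod_beta')
    from measurable_compose[OF this measurable_fun_upd_coord] show ?thesis
      by (simp add: case_prod_beta')
  qed
  from measurable_compose[OF this Suc.IH]
  have "case_prod (\<lambda>(w, x) t. mixed_partial q k (F w) (x(k := t)))
      \<in> borel_measurable ((N \<Otimes>\<^sub>M lborel_coords) \<Otimes>\<^sub>M lborel)"
    by (simp add: case_prod_beta')
  from borel_measurable_Lp1[OF this] show ?case
    by (simp add: case_prod_beta')
qed

lemma borel_measurable_mixed_partial:
  assumes "F \<in> borel_measurable lborel_coords"
  shows "mixed_partial q k F \<in> borel_measurable lborel_coords"
proof -
  have "case_prod (\<lambda>w::nat \<Rightarrow> real. F) \<in> borel_measurable (lborel_coords \<Otimes>\<^sub>M lborel_coords)"
    using measurable_compose[OF measurable_snd assms] by (simp add: case_prod_beta')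
  from measurable_Pair2[OF borel_measurable_mixed_partial_param[OF this], of undefined]
  show ?thesis
    by (simp add: space_PiM)
qed

lemma borel_measurable_mixed_partial_slice:
  assumes "F \<in> borel_measurable lborel_coords"
  shows "(\<lambda>t. mixed_partial q k F (x(j := t))) \<in> borel_measurable lborel"
  using measurable_compose[OF measurable_fun_upd_slice borel_measurable_mixed_partial[OF assms]] by simp

lemma mixed_partial_mono:
  assumes "\<And>x. F x \<le> G x"
  shows "mixed_partial q k F x \<le> mixed_partial q k G x"
  by (induction k arbitrary: x) (simp_all add: assms Lp1_mono)

lemma mixed_partial_cong:
  assumes "\<And>w. (\<forall>i\<ge>k. w i = x i) \<Longrightarrow> F w = G w"
  shows "mixed_partial q k F x = mixed_partial q k G x"
  using assms
proof (induction k arbitrary: x)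
  case (Suc k)
  have "mixed_partial q k F (x(k := t)) = mixed_partial q k G (x(k := t))" for t
    using Suc.prems by (intro Suc.IH) auto
  then show ?case
    by simp
qed auto

lemma mixed_partial_point_cong:
  assumes "\<forall>i\<ge>k. x i = x' i"
  shows "mixed_partial q k F x = mixed_partial q k F x'"
  using assms
proof (induction k arbitrary: x x')
  case 0
  then have "x = x'"
    by auto
  then show ?case
    by simp
next
  case (Suc k)
  have "mixed_partial q k F (x(k := t)) = mixed_partial q k F (x'(k := t))" for t
    using Suc.prems by (intro Suc.IH) auto
  then show ?case
    by simp
qed

lemma mixed_partial_zero: "mixed_partial q k (\<lambda>x. 0) x = 0"
  by (induction k arbitrary: x) (simp_all add: Lp1_zero)

lemma mixed_partial_cmult_le:
  assumes "F \<in> borel_measurable lborel_coords" and "\<forall>i<k. 1 \<le> q i" and "0 < c"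
  shows "mixed_partial q k (\<lambda>x. ennreal c * F x) x \<le> ennreal c * mixed_partial q k F x"
  using assms(2)
proof (induction k arbitrary: x)
  case (Suc k)
  have "mixed_partial q (Suc k) (\<lambda>x. ennreal c * F x) x
      \<le> Lp1 (q k) (\<lambda>t. ennreal c * mixed_partial q k F (x(k := t)))"
    using Suc by (simp add: Lp1_mono)
  also have "\<dots> \<le> ennreal c * mixed_partial q (Suc k) F x"
    using Suc.prems assms Lp1_cmult_le[OF borel_measurable_mixed_partial_slice[OF assms(1)]] by simp
  finally show ?case .
qed simp

lemma mixed_partial_add_le:
  assumes F: "F \<in> borel_measurable lborel_coords" and G: "G \<in> borel_measurable lborel_coords"
    and q: "\<forall>i<k. 1 \<le> q i"
  shows "mixed_partial q k (\<lambda>x. F x + G x) x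
    \<le> ennreal (4 ^ k) * (mixed_partial q k F x + mixed_partial q k G x)"
  using q
proof (induction k arbitrary: x)
  case (Suc k)
  let ?F = "\<lambda>t. mixed_partial q k F (x(k := t))" and ?G = "\<lambda>t. mixed_partial q k G (x(k := t))"
  have [measurable]: "?F \<in> borel_measurable lborel" "?G \<in> borel_measurable lborel"
    by (rule borel_measurable_mixed_partial_slice[OF F], rule borel_measurable_mixed_partial_slice[OF G])
  have "mixed_partial q (Suc k) (\<lambda>x. F x + G x) x \<le> Lp1 (q k) (\<lambda>t. ennreal (4 ^ k) * (?F t + ?G t))"
    using Suc by (simp add: Lp1_mono)
  also have "\<dots> \<le> ennreal (4 ^ k) * Lp1 (q k) (\<lambda>t. ?F t + ?G t)"
    using Suc.prems by (intro Lp1_cmult_le) auto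
  also have "\<dots> \<le> ennreal (4 ^ k) * (4 * (Lp1 (q k) ?F + Lp1 (q k) ?G))"
    using Suc.prems by (intro mult_left_mono Lp1_add_le) auto
  also have "\<dots> = ennreal (4 ^ Suc k) * (mixed_partial q (Suc k) F x + mixed_partial q (Suc k) G x)"
    by (simp add: ennreal_mult' distrib_left ac_simps)
  finally show ?case .
qed simp

lemma mixed_partial_sum_le:
  assumes "finite J" and F: "\<And>j. F j \<in> borel_measurable lborel_coords" and q: "\<forall>i<k. 1 \<le> q i"
  shows "mixed_partial q k (\<lambda>x. \<Sum>j\<in>J. F j x) x
    \<le> ennreal ((4 ^ k) ^ card J) * (\<Sum>j\<in>J. mixed_partial q k (F j) x)"
  using assms(1)
proof (induction J rule: finite_induct)
  case empty
  then show ?case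
    by (simp add: mixed_partial_zero)
next
  case (insert j J)
  define K :: real where "K = 4 ^ k"
  have "1 \<le> K ^ card J"
    by (simp add: K_def)
  then have K_J: "mixed_partial q k (F j) x \<le> ennreal (K ^ card J) * mixed_partial q k (F j) x"
    using mult_right_mono[of 1 "ennreal (K ^ card J)" "mixed_partial q k (F j) x"]
    by (simp add: ennreal_leI[of 1, simplified])
  have "(\<lambda>x. \<Sum>j\<in>J. F j x) \<in> borel_measurable lborel_coords"
    using F by (intro borel_measurable_sum) auto
  with insert have "mixed_partial q k (\<lambda>x. \<Sum>j\<in>insert j J. F j x) x
      \<le> ennreal K * (mixed_partial q k (F j) x + mixed_partial q k (\<lambda>x. \<Sum>j\<in>J. F j x) x)"
    using mixed_partial_add_le[OF F _ q] by (simp add: K_def)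
  also have "\<dots> \<le> ennreal K * (ennreal (K ^ card J) * mixed_partial q k (F j) x
      + ennreal (K ^ card J) * (\<Sum>j\<in>J. mixed_partial q k (F j) x))"
    using insert.IH K_J by (intro mult_left_mono add_mono) (auto simp: K_def)
  also have "\<dots> = ennreal (K ^ card (insert j J)) * (\<Sum>j\<in>insert j J. mixed_partial q k (F j) x)"
    using insert by (simp add: K_def distrib_left[symmetric] mult.assoc[symmetric] ennreal_mult'[symmetric])
  finally show ?case
    by (simp add: K_def)
qed

definition translate_n :: "nat \<Rightarrow> (nat \<Rightarrow> real) \<Rightarrow> (nat \<Rightarrow> real) \<Rightarrow> nat \<Rightarrow> real" where
  "translate_n n z x = (\<lambda>i. if i < n then x i + z i else x i)"

lemma measurable_translate_n: "translate_n n z \<in> measurable lborel_coords lborel_coords"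
  unfolding translate_n_def
proof (rule measurable_PiM_single')
  show "(\<lambda>x. if i < n then x i + z i else x i) \<in> measurable lborel_coords lborel" for i
    by (cases "i < n") simp_all
qed (simp add: space_PiM)

lemma mixed_partial_translate_n:
  assumes "F \<in> borel_measurable lborel_coords" and "k \<le> n"
  shows "mixed_partial q k (\<lambda>x. F (translate_n n z x)) x = mixed_partial q k F (translate_n n z x)"
  using assms(2)
proof (induction k arbitrary: x)
  case (Suc k)
  then have "translate_n n z (x(k := t)) = (translate_n n z x)(k := t + z k)" for t
    by (auto simp: translate_n_def)
  with Suc have "mixed_partial q (Suc k) (\<lambda>x. F (translate_n n z x)) x
      = Lp1 (q k) (\<lambda>t. mixed_partial q k F ((translate_n n z x)(k := t + z k)))"
    by simp
  also have "\<dots> = mixed_partial q (Suc k) F (translate_n n z x)"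
    using Lp1_translate[OF borel_measurable_mixed_partial_slice[OF assms(1)]] by simp
  finally show ?case .
qed simp

lemma mixed_partial_translate_n_invariant:
  assumes "F \<in> borel_measurable lborel_coords"
  shows "mixed_partial q n (\<lambda>x. F (translate_n n z x)) x = mixed_partial q n F x"
  using mixed_partial_translate_n[OF assms order.refl]
    mixed_partial_point_cong[of n "translate_n n z x" x]
  by (simp add: translate_n_def)

(* f is only measurable for PiM {..<n}; restricting the argument makes the cut-off measurable
   on all coordinates and changes nothing at the points reached from the base point \<lambda>_. undefined. *)
definition ball_cutoff ::
  "nat \<Rightarrow> ((nat \<Rightarrow> real) \<Rightarrow> real) \<Rightarrow> real \<Rightarrow> (nat \<Rightarrow> real) \<Rightarrow> (nat \<Rightarrow> real) \<Rightarrow> ennreal" where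
  "ball_cutoff n f r y x = ennreal (\<bar>f (restrict x {..<n})\<bar> * indicator (ball_n n y r) x)"

definition local_norm ::
  "nat \<Rightarrow> (nat \<Rightarrow> ennreal) \<Rightarrow> ((nat \<Rightarrow> real) \<Rightarrow> real) \<Rightarrow> real \<Rightarrow> (nat \<Rightarrow> real) \<Rightarrow> ennreal" where
  "local_norm n p f r y = mixed_partial p n (ball_cutoff n f r y) (\<lambda>_. undefined)"

lemma amalgam_norm_eq_local_norm:
  "amalgam_norm n p s r f = mixed_partial s n (local_norm n p f r) (\<lambda>_. undefined)"
proof -
  have "mixed_norm n p (\<lambda>x. f x * indicator (ball_n n y r) x) = local_norm n p f r y" for y
    unfolding mixed_norm_def local_norm_def
  proof (rule mixed_partial_cong)
    fix w :: "nat \<Rightarrow> real"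
    assume "\<forall>i\<ge>n. w i = undefined"
    then have "restrict w {..<n} = w"
      by (auto simp: restrict_def)
    then show "ennreal \<bar>f w * indicator (ball_n n y r) w\<bar> = ball_cutoff n f r y w"
      by (simp add: ball_cutoff_def abs_mult)
  qed
  then show ?thesis
    by (simp add: amalgam_norm_def)
qed

lemma borel_measurable_ball_cutoff:
  assumes "f \<in> borel_measurable (lebesgue_n n)"
  shows "case_prod (ball_cutoff n f r) \<in> borel_measurable (lborel_coords \<Otimes>\<^sub>M lborel_coords)"
proof -
  let ?M = "lborel_coords \<Otimes>\<^sub>M lborel_coords"
  have f: "(\<lambda>z. f (restrict (snd z) {..<n})) \<in> borel_measurable ?M"
    using measurable_compose[OF measurable_compose[OF measurable_snd
        measurable_restrict_subset[of "{..<n}" UNIV "\<lambda>_. lborel"]] assms]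
    by simp
  have "(\<lambda>z. dist_n n (snd z) (fst z)) \<in> borel_measurable ?M"
    unfolding dist_n_def by measurable
  then have ball: "{z \<in> space ?M. dist_n n (snd z) (fst z) < r} \<in> sets ?M"
    by measurable
  have "case_prod (ball_cutoff n f r)
      = (\<lambda>z. ennreal (\<bar>f (restrict (snd z) {..<n})\<bar> * indicator {z \<in> space ?M. dist_n n (snd z) (fst z) < r} z))"
    by (auto simp: fun_eq_iff ball_cutoff_def ball_n_def indicator_def space_pair_measure space_PiM)
  also have "\<dots> \<in> borel_measurable ?M"
    by (intro measurable_compose[OF _ measurable_ennreal] borel_measurable_times borel_measurable_abs
        f borel_measurable_indicator ball)
  finally show ?thesis .
qed

lemma borel_measurable_local_norm:
  assumes "f \<in> borel_measurable (lebesgue_n n)"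
  shows "local_norm n p f r \<in> borel_measurable lborel_coords"
proof -
  have "case_prod (\<lambda>y. mixed_partial p n (ball_cutoff n f r y))
      \<in> borel_measurable (lborel_coords \<Otimes>\<^sub>M lborel_coords)"
    by (rule borel_measurable_mixed_partial_param[OF borel_measurable_ball_cutoff[OF assms]])
  from measurable_Pair1[OF this, of "\<lambda>_. undefined"] show ?thesis
    unfolding local_norm_def[abs_def] by (simp add: space_PiM)
qed

definition grid_box :: "nat \<Rightarrow> int \<Rightarrow> (nat \<Rightarrow> int) set" where
  "grid_box n L = {m. (\<forall>i<n. \<bar>m i\<bar> \<le> L) \<and> (\<forall>i\<ge>n. m i = 0)}"

lemma finite_grid_box: "finite (grid_box n L)"
proof (rule finite_subset)
  show "grid_box n L \<subseteq> {m. \<forall>i. (i \<in> {..<n} \<longrightarrow> m i \<in> {-L..L}) \<and> (i \<notin> {..<n} \<longrightarrow> m i = 0)}"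
    by (auto simp: grid_box_def abs_le_iff)
qed (intro finite_set_of_finite_funs finite_lessThan finite_atLeastAtMost_int)

lemma grid_box_covers_ball:
  assumes n: "1 \<le> n" and a: "0 < a" and xy: "dist_n n x y < lam * a"
  shows "\<exists>m \<in> grid_box n (\<lceil>lam * n\<rceil> + 1). dist_n n x (translate_n n (\<lambda>i. a / n * m i) y) < a"
proof -
  define d where "d = a / n"
  have d: "0 < d"
    using n a by (simp add: d_def)
  define m where "m i = (if i < n then round ((x i - y i) / d) else 0)" for i
  have "m \<in> grid_box n (\<lceil>lam * n\<rceil> + 1)"
  proof -
    have "\<bar>m i\<bar> \<le> \<lceil>lam * n\<rceil> + 1" if "i < n" for i
    proof -
      define t where "t = (x i - y i) / d"
      have "(x i - y i)\<^sup>2 \<le> (\<Sum>j<n. (x j - y j)\<^sup>2)"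
        using that by (intro member_le_sum) auto
      then have "\<bar>x i - y i\<bar> \<le> dist_n n x y"
        unfolding dist_n_def by (metis real_sqrt_abs real_sqrt_le_mono)
      with xy d have "\<bar>t\<bar> < lam * a / d"
        by (simp add: t_def abs_divide divide_strict_right_mono)
      also have "lam * a / d = lam * n"
        using n a by (simp add: d_def)
      finally have "\<bar>real_of_int (round t)\<bar> \<le> real_of_int (\<lceil>lam * n\<rceil> + 1)"
        using of_int_round_abs_le[of t] le_of_int_ceiling[of "lam * n"] by arith
      then show ?thesis
        using that by (simp add: m_def flip: t_def of_int_abs)
    qed
    then show ?thesis
      by (simp add: grid_box_def m_def)
  qed
  moreover have "dist_n n x (translate_n n (\<lambda>i. d * m i) y) < a"
  proof -
    have "(x i - (y i + d * m i))\<^sup>2 \<le> (d / 2)\<^sup>2" if "i < n" for i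
    proof -
      define t where "t = (x i - y i) / d"
      have "x i - (y i + d * m i) = d * (t - round t)"
        using that d by (simp add: m_def t_def field_simps)
      with d of_int_round_abs_le[of t] have "\<bar>x i - (y i + d * m i)\<bar> \<le> \<bar>d / 2\<bar>"
        by (simp add: abs_mult abs_minus_commute)
      then show ?thesis
        by (simp only: abs_le_square_iff)
    qed
    then have "(\<Sum>i<n. (x i - translate_n n (\<lambda>i. d * m i) y i)\<^sup>2) \<le> n * (d / 2)\<^sup>2"
      using sum_mono[of "{..<n}" "\<lambda>i. (x i - translate_n n (\<lambda>i. d * m i) y i)\<^sup>2" "\<lambda>_. (d / 2)\<^sup>2"]
      by (simp add: translate_n_def)
    also have "\<dots> < a\<^sup>2"
      using n a by (simp add: d_def power2_eq_square field_simps)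
    finally have "dist_n n x (translate_n n (\<lambda>i. d * m i) y) < sqrt (a\<^sup>2)"
      unfolding dist_n_def by (rule real_sqrt_less_mono)
    then show ?thesis
      using a by simp
  qed
  ultimately show ?thesis
    by (auto simp: d_def)
qed

lemma ball_cutoff_le_sum_grid:
  assumes "1 \<le> n" "0 < a"
  shows "ball_cutoff n f (lam * a) y x
    \<le> (\<Sum>m \<in> grid_box n (\<lceil>lam * n\<rceil> + 1). ball_cutoff n f a (translate_n n (\<lambda>i. a / n * m i) y) x)"
proof (cases "x \<in> ball_n n y (lam * a)")
  case True
  then obtain m where m: "m \<in> grid_box n (\<lceil>lam * n\<rceil> + 1)" "dist_n n x (translate_n n (\<lambda>i. a / n * m i) y) < a"
    using grid_box_covers_ball[OF assms, of x y lam] by (auto simp: ball_n_def)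
  with True have "ball_cutoff n f (lam * a) y x = ball_cutoff n f a (translate_n n (\<lambda>i. a / n * m i) y) x"
    by (simp add: ball_cutoff_def ball_n_def)
  also have "\<dots> \<le> (\<Sum>m \<in> grid_box n (\<lceil>lam * n\<rceil> + 1). ball_cutoff n f a (translate_n n (\<lambda>i. a / n * m i) y) x)"
    using m(1) finite_grid_box by (intro member_le_sum) auto
  finally show ?thesis .
qed (simp add: ball_cutoff_def)

definition dilation_const :: "nat \<Rightarrow> real \<Rightarrow> real" where
  "dilation_const n lam = (let N = card (grid_box n (\<lceil>lam * n\<rceil> + 1)) in (4 ^ n) ^ (2 * N) * real N)"

lemma one_le_dilation_const:
  assumes "0 < lam"
  shows "1 \<le> dilation_const n lam"
proof -
  let ?N = "card (grid_box n (\<lceil>lam * n\<rceil> + 1))"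
  have "0 \<le> lam * n"
    using assms by simp
  then have "(\<lambda>_. 0) \<in> grid_box n (\<lceil>lam * n\<rceil> + 1)"
    by (simp add: grid_box_def)
  then have "1 \<le> ?N"
    using finite_grid_box card_0_eq[of "grid_box n (\<lceil>lam * n\<rceil> + 1)"] by fastforce
  moreover have "1 \<le> ((4 ^ n) ^ (2 * ?N) :: real)"
    by simp
  ultimately show ?thesis
    unfolding dilation_const_def Let_def
    using mult_mono[of 1 "(4 ^ n) ^ (2 * ?N)" 1 "real ?N"] by simp
qed

lemma amalgam_norm_dilation_le:
  assumes n: "1 \<le> n" and p: "\<forall>i<n. 1 \<le> p i" and s: "\<forall>i<n. 1 \<le> s i"
    and f: "f \<in> borel_measurable (lebesgue_n n)" and a: "0 < a"
  shows "amalgam_norm n p s (lam * a) f \<le> ennreal (dilation_const n lam) * amalgam_norm n p s a f"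
proof -
  define J where "J = grid_box n (\<lceil>lam * n\<rceil> + 1)"
  define C :: real where "C = (4 ^ n) ^ card J"
  define G where "G m y = local_norm n p f a (translate_n n (\<lambda>i. a / n * m i) y)" for m y
  have [measurable]: "G m \<in> borel_measurable lborel_coords" for m
    unfolding G_def[abs_def]
    using measurable_compose[OF measurable_translate_n borel_measurable_local_norm[OF f]] .
  have local: "local_norm n p f (lam * a) y \<le> ennreal C * (\<Sum>m\<in>J. G m y)" for y
  proof -
    have "local_norm n p f (lam * a) y
        \<le> mixed_partial p n (\<lambda>x. \<Sum>m\<in>J. ball_cutoff n f a (translate_n n (\<lambda>i. a / n * m i) y) x) (\<lambda>_. undefined)"
      unfolding local_norm_def J_def by (intro mixed_partial_mono ball_cutoff_le_sum_grid n a)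
    also have "\<dots> \<le> ennreal C * (\<Sum>m\<in>J. G m y)"
      unfolding C_def G_def local_norm_def
      using measurable_Pair2[OF borel_measurable_ball_cutoff[OF f]]
      by (intro mixed_partial_sum_le p) (auto simp: J_def finite_grid_box space_PiM)
    finally show ?thesis .
  qed
  have "amalgam_norm n p s (lam * a) f \<le> mixed_partial s n (\<lambda>y. ennreal C * (\<Sum>m\<in>J. G m y)) (\<lambda>_. undefined)"
    unfolding amalgam_norm_eq_local_norm by (intro mixed_partial_mono local)
  also have "\<dots> \<le> ennreal C * mixed_partial s n (\<lambda>y. \<Sum>m\<in>J. G m y) (\<lambda>_. undefined)"
    by (intro mixed_partial_cmult_le s) (auto simp: C_def)
  also have "\<dots> \<le> ennreal C * (ennreal C * (\<Sum>m\<in>J. mixed_partial s n (G m) (\<lambda>_. undefined)))"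
    unfolding C_def by (intro mult_left_mono mixed_partial_sum_le s) (auto simp: J_def finite_grid_box)
  also have "(\<Sum>m\<in>J. mixed_partial s n (G m) (\<lambda>_. undefined)) = card J * amalgam_norm n p s a f"
    unfolding G_def amalgam_norm_eq_local_norm
    by (simp add: mixed_partial_translate_n_invariant borel_measurable_local_norm[OF f])
  also have "ennreal C * (ennreal C * (card J * amalgam_norm n p s a f))
      = ennreal (C * C * card J) * amalgam_norm n p s a f"
    by (simp add: C_def ennreal_mult' ennreal_of_nat_eq_real_of_nat mult_ac)
  also have "C * C * card J = dilation_const n lam"
    by (simp add: dilation_const_def C_def J_def Let_def mult_2 power_add)
  finally show ?thesis .
qed

theorem lemma3p1:
  fixes n :: nat and p s :: "nat \<Rightarrow> ennreal" and \<alpha> :: ennreal and \<rho> :: real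
  assumes "n \<ge> 1"
    and "\<forall>i<n. 1 \<le> p i" and "\<forall>i<n. 1 \<le> s i" and "1 \<le> \<alpha>"
    and "(\<Sum>i<n. 1 / s i) / of_nat n \<le> 1 / \<alpha>"
    and "1 / \<alpha> \<le> (\<Sum>i<n. 1 / p i) / of_nat n"
    and "0 < \<rho>"
  shows "\<exists>c C :: real. 0 < c \<and> c \<le> C \<and>
    (\<forall>f r. locally_integrable_n n f \<longrightarrow> 0 < r \<longrightarrow>
       ennreal c * amalgam_norm n p s (\<rho> * r) f \<le> amalgam_norm n p s r f \<and>
       amalgam_norm n p s r f \<le> ennreal C * amalgam_norm n p s (\<rho> * r) f)"
proof -
  define K where "K = dilation_const n \<rho>"
  define K' where "K' = dilation_const n (1 / \<rho>)"
  have K: "1 \<le> K" and K': "1 \<le> K'"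
    using assms(7) by (simp_all add: K_def K'_def one_le_dilation_const)
  show ?thesis
  proof (intro exI conjI allI impI)
    show "0 < 1 / K" "1 / K \<le> K'"
      using K K' by (simp_all add: divide_le_eq_1 order_trans[OF _ K'])
    fix f :: "(nat \<Rightarrow> real) \<Rightarrow> real" and r :: real
    assume "locally_integrable_n n f" and r: "0 < r"
    then have f: "f \<in> borel_measurable (lebesgue_n n)"
      by (simp add: locally_integrable_n_def)
    have "ennreal (1 / K) * amalgam_norm n p s (\<rho> * r) f \<le> ennreal (1 / K) * (ennreal K * amalgam_norm n p s r f)"
      unfolding K_def by (intro mult_left_mono amalgam_norm_dilation_le assms(1-3) f r) simp
    also have "\<dots> = amalgam_norm n p s r f"
      using K by (simp add: mult.assoc[symmetric] ennreal_mult'[symmetric])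
    finally show "ennreal (1 / K) * amalgam_norm n p s (\<rho> * r) f \<le> amalgam_norm n p s r f" .
    show "amalgam_norm n p s r f \<le> ennreal K' * amalgam_norm n p s (\<rho> * r) f"
      using amalgam_norm_dilation_le[OF assms(1-3) f, of "\<rho> * r" "1 / \<rho>"] assms(7) r
      by (simp add: K'_def)
  qed
qed

end
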